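(* Let $q\in(0,1)$ and $b>0$, and let $(s_n)_{n\ge0}$ be a sequence of positive numbers together with an infinite set $B=\{n_1<n_2<\dots\}$ of nonnegative integers (the bad subscripts) such that $s_{n+1}=qs_n$ for $n\notin B$ and $s_{n+1}\le 2qs_n+b$ for $n\in B$. Suppose $n_{i+1}-n_i\to\infty$ as $i\to\infty$. Then $s_{n_i}\to0$ as $i\to\infty$. *)

theory Defs
  imports "HOL-Analysis.Analysis"
begin

end

theory Submission
  imports Defs
begin

(* Between two consecutive bad subscripts the sequence is geometric, so with the gaps
   g_i = n_{i+1} - n_i we get s_{n_{i+1}} \<le> q^(g_i - 1) (2 q s_{n_i} + b).  Since g_i \<rightarrow> \<infinity>,
   the factor q^(g_i - 1) tends to 0, so a_i = s_{n_i} satisfies a_{i+1} \<le> c_i a_i + e_i with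
   c_i, e_i \<rightarrow> 0: eventually a contraction perturbed by a null sequence, which forces a_i \<rightarrow> 0. *)

lemma enumerate_gap_notin:
  fixes S :: "'a::wellorder set"
  assumes "infinite S" "enumerate S i < x" "x < enumerate S (Suc i)"
  shows "x \<notin> S"
  using assms not_less_Least[of x "\<lambda>s. s \<in> S \<and> enumerate S i < s"]
  by (simp add: enumerate_Suc'')

lemma geometric_segment:
  fixes s :: "nat \<Rightarrow> 'a::monoid_mult"
  assumes "\<And>j. j < k \<Longrightarrow> s (Suc (m + j)) = q * s (m + j)"
  shows "s (m + k) = q ^ k * s m"
  using assms
proof (induction k)
  case (Suc k)
  then show ?case by (simp add: mult.assoc)
qed simp

lemma tendsto_zero_of_contraction_plus_null:
  fixes a e :: "nat \<Rightarrow> real"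
  assumes nonneg: "\<And>i. 0 \<le> a i" and lam: "0 \<le> lam" "lam < 1"
    and rec: "eventually (\<lambda>i. a (Suc i) \<le> lam * a i + e i) sequentially"
    and e: "e \<longlonglongrightarrow> 0"
  shows "a \<longlonglongrightarrow> 0"
proof (rule order_tendstoI)
  fix r :: real
  assume r: "0 < r"
  have "eventually (\<lambda>i. e i < (1 - lam) * r / 2) sequentially"
    using lam r by (intro order_tendstoD(2)[OF e]) simp
  with rec have "eventually (\<lambda>i. a (Suc i) \<le> lam * a i + (1 - lam) * r / 2) sequentially"
    by eventually_elim simp
  then obtain N where N: "\<And>i. i \<ge> N \<Longrightarrow> a (Suc i) \<le> lam * a i + (1 - lam) * r / 2"
    by (auto simp: eventually_sequentially)
  have bound: "a (k + N) \<le> lam ^ k * a N + r / 2" for k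
  proof (induction k)
    case 0
    show ?case using r by simp
  next
    case (Suc k)
    have "a (Suc k + N) \<le> lam * a (k + N) + (1 - lam) * r / 2"
      using N[of "k + N"] by simp
    also have "\<dots> \<le> lam * (lam ^ k * a N + r / 2) + (1 - lam) * r / 2"
      using Suc.IH lam by (intro add_right_mono mult_left_mono) auto
    also have "\<dots> = lam ^ Suc k * a N + r / 2"
      by (simp add: field_simps)
    finally show ?case .
  qed
  have "(\<lambda>k. lam ^ k * a N) \<longlonglongrightarrow> 0"
    using lam by (intro tendsto_mult_left_zero LIMSEQ_power_zero) auto
  then have "eventually (\<lambda>k. lam ^ k * a N < r / 2) sequentially"
    using r by (intro order_tendstoD(2)) auto
  then have "eventually (\<lambda>k. a (k + N) < r) sequentially"
  proof eventually_elim
    case (elim k)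
    then show ?case using bound[of k] by linarith
  qed
  then show "eventually (\<lambda>i. a i < r) sequentially"
    using eventually_sequentially_seg[of "\<lambda>i. a i < r" N] by simp
next
  fix r :: real
  assume "r < 0"
  then show "eventually (\<lambda>i. r < a i) sequentially"
    using nonneg by (intro always_eventually allI) (rule less_le_trans)
qed

lemma tendsto_zero_of_null_mult_plus_null:
  fixes a c e :: "nat \<Rightarrow> real"
  assumes "\<And>i. 0 \<le> a i" and rec: "\<And>i. a (Suc i) \<le> c i * a i + e i"
    and "c \<longlonglongrightarrow> 0" and "e \<longlonglongrightarrow> 0"
  shows "a \<longlonglongrightarrow> 0"
proof (rule tendsto_zero_of_contraction_plus_null)
  have "eventually (\<lambda>i. c i < 1 / 2) sequentially"
    by (intro order_tendstoD(2)[OF \<open>c \<longlonglongrightarrow> 0\<close>]) simp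
  then show "eventually (\<lambda>i. a (Suc i) \<le> 1 / 2 * a i + e i) sequentially"
  proof eventually_elim
    case (elim i)
    have "c i * a i \<le> 1 / 2 * a i"
      using elim \<open>0 \<le> a i\<close> by (intro mult_right_mono) auto
    then show ?case using rec[of i] by linarith
  qed
qed (use assms in auto)

lemma geometric_decay_between_enumerate:
  fixes s :: "nat \<Rightarrow> real" and B :: "nat set"
  assumes "infinite B" and "0 \<le> q"
    and good: "\<And>n. n \<notin> B \<Longrightarrow> s (Suc n) = q * s n"
    and bad: "\<And>n. n \<in> B \<Longrightarrow> s (Suc n) \<le> 2 * q * s n + b"
  shows "s (enumerate B (Suc i))
           \<le> q ^ (enumerate B (Suc i) - enumerate B i - 1) * (2 * q * s (enumerate B i) + b)"
proof -
  let ?n = "enumerate B"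
  define g where "g = ?n (Suc i) - ?n i - 1"
  have "?n (Suc i) = Suc (?n i) + g"
    using enumerate_step[OF \<open>infinite B\<close>, of i] unfolding g_def by simp
  moreover have "Suc (?n i) + j \<notin> B" if "j < g" for j
    using that by (intro enumerate_gap_notin[OF \<open>infinite B\<close>, of i]) (auto simp: g_def)
  ultimately have "s (?n (Suc i)) = q ^ g * s (Suc (?n i))"
    using geometric_segment[of g s "Suc (?n i)" q] good by simp
  also have "\<dots> \<le> q ^ g * (2 * q * s (?n i) + b)"
    using bad[OF enumerate_in_set[OF \<open>infinite B\<close>]] \<open>0 \<le> q\<close> by (intro mult_left_mono) auto
  finally show ?thesis
    unfolding g_def .
qed

theorem lemma6p1:
  fixes q b :: real and s :: "nat \<Rightarrow> real" and B :: "nat set"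
  assumes "0 < q" and "q < 1" and "0 < b"
    and "\<And>n. s n > 0"
    and "infinite B"
    and "\<And>n. n \<notin> B \<Longrightarrow> s (Suc n) = q * s n"
    and "\<And>n. n \<in> B \<Longrightarrow> s (Suc n) \<le> 2 * q * s n + b"
    and "filterlim (\<lambda>i. enumerate B (Suc i) - enumerate B i) at_top sequentially"
  shows "(\<lambda>i. s (enumerate B i)) \<longlonglongrightarrow> 0"
proof -
  define g where "g i = enumerate B (Suc i) - enumerate B i - 1" for i
  have rec: "s (enumerate B (Suc i)) \<le> (q ^ g i * (2 * q)) * s (enumerate B i) + q ^ g i * b"
    for i
    using geometric_decay_between_enumerate[of B q s b i] assms(1,5-7)
    unfolding g_def by (simp add: algebra_simps)
  have "filterlim g at_top sequentially"
    unfolding g_def using filterlim_compose[OF filterlim_minus_const_nat_at_top assms(8)] .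
  then have "(\<lambda>i. q ^ g i) \<longlonglongrightarrow> 0"
    using assms(1,2) by (intro filterlim_compose[OF LIMSEQ_power_zero]) auto
  then show ?thesis
    using assms(4) less_imp_le
    by (intro tendsto_zero_of_null_mult_plus_null[where c = "\<lambda>i. q ^ g i * (2 * q)"
          and e = "\<lambda>i. q ^ g i * b", OF _ rec] tendsto_mult_left_zero) auto
qed

end
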